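(* Consider the setting and algorithm described in the context. Let $\gamma>0$ and $K_0\ge0$ be such that for all $k\ge K_0$: $\gamma_k=\gamma$, $\delta_k=\delta:=2\nu+L_{\nabla h}+\frac{2\|A\|^2}{\gamma}$ and $\|z^{k+1}\|\le\min\left(\frac{\varepsilon}{\gamma},\sqrt{\frac{2\varepsilon}{\gamma}}\right)$. Let $c_1:=\nu$, $c_2:=\frac{\delta(2-\beta)}{2\beta}$, $c_3:=\frac{\gamma}{2}$. Then for all $k\ge K_0+1$: (i) $\Psi(x^{k+1},z^{k+1},u^{k+1},\delta,\gamma)+\theta_kf(Kx^k)-\theta_k\big(\langle Kx^{k+1},y^{k+1}\rangle-f^*(y^{k+1})\big)\le \Psi(x^k,z^k,u^k,\delta,\gamma)-c_1\|x^k-x^{k+1}\|^2-c_2\|u^k-u^{k+1}\|^2-c_3\|z^k-z^{k+1}\|^2$; (ii) $\Psi(x^{k+1},z^{k+1},u^{k+1},\delta,\gamma)-\theta_kf(Kx^{k+1})\le -c_1\|x^k-x^{k+1}\|^2-c_2\|u^k-u^{k+1}\|^2-c_3\|z^k-z^{k+1}\|^2$.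
   Context: Setting: $\mathcal{S}\subseteq\mathbb{R}^n$ nonempty, convex, compact; $A:\mathbb{R}^n\to\mathbb{R}^s$, $K:\mathbb{R}^n\to\mathbb{R}^p$ linear with adjoints $A^*,K^*$ and operator norm $\|A\|$; $g:\mathbb{R}^s\to\mathbb{R}\cup\{+\infty\}$ proper, convex, lsc; $h:\mathbb{R}^n\to\mathbb{R}$ differentiable on an open set containing $\mathcal{S}$ with $L_{\nabla h}$-Lipschitz gradient there; $f:\mathbb{R}^p\to\mathbb{R}\cup\{+\infty\}$ proper, convex, lsc with $K(\mathcal{S})\subseteq\operatorname{int}(\operatorname{dom}f)$ and $f(Kx)>0$ on $\mathcal{S}$; $\mathcal{S}\cap A^{-1}(\operatorname{dom}g)\ne\emptyset$, $\inf_{x\in\mathcal{S}}\{g(Ax)+h(x)\}>0$; $A(\mathcal{S})\subseteq\operatorname{dom}(\partial g)$ and there is $\ell>0$ with $\operatorname{dist}(0,\partial g(Ax))\le\ell$ for all $x\in\mathcal{S}$. Notation: $f^*,g^*$ Fenchel conjugates; $\iota_{\mathcal{S}}$ indicator; $\operatorname{Proj}_{\mathcal{S}}$ projection; $\operatorname{prox}_{\varphi,\kappa}(x)=\arg\min_y\{\varphi(y)+\frac1{2\kappa}\|y-x\|^2\}$; $\Psi(x,z,u,\delta,\gamma):=\langle z,Ax\rangle-g^*(z)+h(x)+\iota_{\mathcal{S}}(x)+\frac{\delta}{2}\|x-u\|^2-\frac{\gamma}{2}\|z\|^2$. Algorithm: given $0<\beta<2$, $\nu>0$, $0<q<1$,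 $\delta_0,\theta_0>0$, $\gamma_0=1$, $\varepsilon>0$ and $(x^0,z^0,u^0)$, for $k\ge0$: choose $y^{k+1}\in\partial f(Kx^k)$; $x^{k+1}:=\operatorname{Proj}_{\mathcal{S}}(u^k+\frac{\theta_k}{\delta_k}K^*y^{k+1}-\frac1{\delta_k}\nabla h(x^k)-\frac1{\delta_k}A^*z^k)$; $u^{k+1}:=(1-\beta)u^k+\beta x^{k+1}$; take the smallest $j_k\ge0$ such that with $\gamma_{k,j_k}:=\gamma_kq^{j_k}$, $z^{k+1,j_k}:=\operatorname{prox}_{g^*,1/\gamma_{k,j_k}}(Ax^{k+1}/\gamma_{k,j_k})$ one has $\theta_{k+1}:=\Psi(x^{k+1},z^{k+1,j_k},u^{k+1},\delta_k,\gamma_{k,j_k})/f(Kx^{k+1})>0$; set $\gamma_{k+1}:=\gamma_{k,j_k}$, $\delta_{k+1}:=2\nu+L_{\nabla h}+2\|A\|^2/\gamma_{k+1}$, $z^{k+1}:=z^{k+1,j_k}$; if $\|z^{k+1}\|>\min(\varepsilon/\gamma_{k+1},\sqrt{2\varepsilon/\gamma_{k+1}})$, replace $\gamma_{k+1}$ by $\gamma_{k+1}q$ and recompute $\delta_{k+1}$ by the same formula. *)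

theory Defs
  imports "HOL-Analysis.Analysis"
begin

text \<open>Extended-real-valued convex analysis notions (functions into R \<union> {+inf} are
modelled as ereal-valued functions).\<close>

definition eff_dom :: "('a \<Rightarrow> ereal) \<Rightarrow> 'a set" where
  "eff_dom f = {x. f x < \<infinity>}"

definition proper_fun :: "('a \<Rightarrow> ereal) \<Rightarrow> bool" where
  "proper_fun f \<longleftrightarrow> (\<forall>x. f x \<noteq> -\<infinity>) \<and> (\<exists>x. f x \<noteq> \<infinity>)"

definition epi :: "('a \<Rightarrow> ereal) \<Rightarrow> ('a \<times> real) set" where
  "epi f = {(x, t). f x \<le> ereal t}"

definition convex_fun :: "('a::real_vector \<Rightarrow> ereal) \<Rightarrow> bool" where
  "convex_fun f \<longleftrightarrow> convex (epi f)"

definition lsc_fun :: "('a::topological_space \<Rightarrow> ereal) \<Rightarrow> bool" where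
  "lsc_fun f \<longleftrightarrow> closed (epi f)"

definition fconj :: "('a::real_inner \<Rightarrow> ereal) \<Rightarrow> 'a \<Rightarrow> ereal" where
  "fconj f y = (SUP x. ereal (inner y x) - f x)"

definition subdiff :: "('a::real_inner \<Rightarrow> ereal) \<Rightarrow> 'a \<Rightarrow> 'a set" where
  "subdiff f x = {v. f x < \<infinity> \<and> (\<forall>w. f x + ereal (inner v (w - x)) \<le> f w)}"

definition subdiff_dom :: "('a::real_inner \<Rightarrow> ereal) \<Rightarrow> 'a set" where
  "subdiff_dom f = {x. subdiff f x \<noteq> {}}"

definition prox :: "('a::real_normed_vector \<Rightarrow> ereal) \<Rightarrow> real \<Rightarrow> 'a \<Rightarrow> 'a" where
  "prox phi kappa x = (SOME y. \<forall>w. phi y + ereal ((norm (y - x))\<^sup>2 / (2 * kappa))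
                                   \<le> phi w + ereal ((norm (w - x))\<^sup>2 / (2 * kappa)))"

text \<open>Psi(x,z,u,delta,gamma) = <z,Ax> - g*(z) + h(x) + iota_S(x) + delta/2 |x-u|^2 - gamma/2 |z|^2\<close>
definition Psi :: "'n::real_inner set \<Rightarrow> ('n \<Rightarrow> 's::real_inner) \<Rightarrow> ('s \<Rightarrow> ereal) \<Rightarrow> ('n \<Rightarrow> real)
    \<Rightarrow> 'n \<Rightarrow> 's \<Rightarrow> 'n \<Rightarrow> real \<Rightarrow> real \<Rightarrow> ereal" where
  "Psi S A g h x z u d gm =
     (if x \<in> S then ereal (inner z (A x) + h x + d / 2 * (norm (x - u))\<^sup>2 - gm / 2 * (norm z)\<^sup>2)
                     - fconj g z
      else \<infinity>)"

end

theory Submission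
  imports Defs
begin

text \<open>Once the backtracking has stalled, every iteration is a step with the fixed parameters
  \<open>\<gamma>\<close> and \<open>\<delta>\<close>, and \<open>\<Psi>\<close> decreases along it. The \<open>x\<close>-update is a projection, so its
  variational inequality together with the descent lemma for \<open>h\<close> controls the \<open>x\<close>-terms, and the
  relaxation \<open>u' = (1 - \<beta>) u + \<beta> x'\<close> turns the proximity term into \<open>-c\<^sub>2 \<parallel>u - u'\<parallel>\<^sup>2\<close>.
  Since \<open>z = prox\<^sub>g\<^sub>*\<^sub>,\<^sub>1\<^sub>/\<^sub>\<gamma>(A x / \<gamma>)\<close> maximizes the \<open>\<gamma>\<close>-strongly concave function
  \<open>w \<mapsto> \<langle>w, A x\<rangle> - \<gamma>/2 \<parallel>w\<parallel>\<^sup>2 - g\<^sup>*(w)\<close>, replacing \<open>z\<^sup>k\<close> by \<open>z\<^sup>k\<^sup>+\<^sup>1\<close> gains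
  \<open>\<gamma>/2 \<parallel>z\<^sup>k - z\<^sup>k\<^sup>+\<^sup>1\<parallel>\<^sup>2\<close>, while firm nonexpansiveness of this map bounds the coupling term
  \<open>\<langle>z\<^sup>k\<^sup>+\<^sup>1 - z\<^sup>k, A (x\<^sup>k\<^sup>+\<^sup>1 - x\<^sup>k)\<rangle>\<close> by \<open>\<parallel>A\<parallel>\<^sup>2/\<gamma> \<parallel>x\<^sup>k - x\<^sup>k\<^sup>+\<^sup>1\<parallel>\<^sup>2\<close>, which the choice
  of \<open>\<delta>\<close> absorbs. Part (ii) follows from (i) because \<open>\<Psi>(x\<^sup>k, z\<^sup>k, u\<^sup>k) = \<theta>\<^sub>k f(K x\<^sup>k)\<close> and
  \<open>y\<^sup>k\<^sup>+\<^sup>1\<close> is a subgradient of \<open>f\<close> at \<open>K x\<^sup>k\<close>. The proximal points (defined by Hilbert choice)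
  exist since \<open>g\<^sup>*\<close> is convex, lower semicontinuous and has an affine minorant, so adding the
  quadratic gives an objective with compact sublevel sets.\<close>

lemma fenchel_young: "ereal (inner y w) - f w \<le> fconj f y"
  unfolding fconj_def by (rule SUP_upper) simp

lemma fconj_subdiff_eq:
  assumes "y \<in> subdiff f v" and "f v = ereal r"
  shows "fconj f y = ereal (inner y v - r)"
proof (rule antisym)
  show "fconj f y \<le> ereal (inner y v - r)"
    unfolding fconj_def
  proof (rule SUP_least)
    fix w
    have "ereal (r + inner y (w - v)) \<le> f w"
      using assms unfolding subdiff_def by auto
    then show "ereal (inner y w) - f w \<le> ereal (inner y v - r)"
      by (cases "f w") (auto simp: inner_diff_right)
  qed
  show "ereal (inner y v - r) \<le> fconj f y"
    using fenchel_young[of y v f] assms(2) by simp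
qed

lemma epi_fconj: "epi (fconj g) = (\<Inter>x. {p. ereal (inner (x, -1) p) \<le> g x})"
proof -
  have "ereal (inner w x) - g x \<le> ereal t \<longleftrightarrow> ereal (inner w x - t) \<le> g x" for w x t
    by (cases "g x") auto
  then show ?thesis
    by (auto simp: epi_def fconj_def SUP_le_iff inner_prod_def inner_commute)
qed

lemma convex_ereal_halfspace_le: "convex {p. ereal (inner a p) \<le> e}"
  by (cases e) (simp_all add: convex_halfspace_le)

lemma closed_ereal_halfspace_le: "closed {p. ereal (inner a p) \<le> e}"
  by (cases e) (simp_all add: closed_halfspace_le)

lemma convex_fun_fconj: "convex_fun (fconj g)"
  unfolding convex_fun_def epi_fconj by (intro convex_INT convex_ereal_halfspace_le)

lemma lsc_fun_fconj: "lsc_fun (fconj g)"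
  unfolding lsc_fun_def epi_fconj by (intro closed_INT ballI closed_ereal_halfspace_le)

lemma fconj_affine_minorant:
  assumes "proper_fun g"
  obtains b r where "\<And>w. ereal (inner w b - r) \<le> fconj g w"
proof -
  obtain b where "g b \<noteq> \<infinity>" "g b \<noteq> -\<infinity>"
    using assms unfolding proper_fun_def by auto
  then obtain r where "g b = ereal r" by (cases "g b") auto
  then show ?thesis
    using fenchel_young[of _ b g] by (intro that) simp
qed

lemma convex_funD:
  assumes "convex_fun \<phi>" "\<phi> a \<le> ereal s" "\<phi> b \<le> ereal t" "0 \<le> \<mu>" "\<mu> \<le> 1"
  shows "\<phi> ((1 - \<mu>) *\<^sub>R a + \<mu> *\<^sub>R b) \<le> ereal ((1 - \<mu>) * s + \<mu> * t)"
proof -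
  have "(a, s) \<in> epi \<phi>" "(b, t) \<in> epi \<phi>" using assms(2,3) by (simp_all add: epi_def)
  then have "(1 - \<mu>) *\<^sub>R (a, s) + \<mu> *\<^sub>R (b, t) \<in> epi \<phi>"
    using assms(1,4,5) unfolding convex_fun_def by (intro convexD) auto
  then show ?thesis by (simp add: epi_def)
qed

lemma closed_sublevel_add_continuous:
  assumes "lsc_fun \<phi>" and "continuous_on UNIV n"
  shows "closed {w. \<phi> w + ereal (n w) \<le> ereal t}"
proof -
  have "{w. \<phi> w + ereal (n w) \<le> ereal t} = (\<lambda>w. (w, t - n w)) -` epi \<phi>"
  proof -
    have "\<phi> w + ereal (n w) \<le> ereal t \<longleftrightarrow> \<phi> w \<le> ereal (t - n w)" for w
      by (cases "\<phi> w") auto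
    then show ?thesis by (auto simp: epi_def)
  qed
  moreover have "continuous_on UNIV (\<lambda>w. (w, t - n w))"
    using assms(2) by (intro continuous_intros)
  ultimately show ?thesis
    using assms(1) unfolding lsc_fun_def by (metis closed_vimage)
qed

lemma ereal_attains_min_compact_sublevels:
  fixes F :: "'a::heine_borel \<Rightarrow> ereal"
  assumes compact: "\<And>t. compact {w. F w \<le> ereal t}"
    and lower: "\<And>w. ereal M \<le> F w" and finite: "F w0 < \<infinity>"
  obtains z where "\<And>w. F z \<le> F w"
proof -
  have "ereal M \<le> (INF w. F w)" "(INF w. F w) \<le> F w0"
    using lower by (auto intro: INF_greatest INF_lower)
  then obtain m where m: "(INF w. F w) = ereal m"
    using finite by (cases "INF w. F w") auto
  define C where "C n = {w. F w \<le> ereal (m + inverse (Suc n))}" for n :: nat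
  have "C n \<noteq> {}" for n
  proof -
    have "(INF w. F w) < ereal (m + inverse (Suc n))" using m by simp
    then obtain w where "F w < ereal (m + inverse (Suc n))" unfolding INF_less_iff by blast
    then have "w \<in> C n" by (simp add: C_def)
    then show ?thesis by blast
  qed
  moreover have "C n \<subseteq> C k" if "k \<le> n" for k n
  proof
    fix w assume "w \<in> C n"
    then have "F w \<le> ereal (m + inverse (Suc n))" by (simp add: C_def)
    also have "\<dots> \<le> ereal (m + inverse (Suc k))" using that by (simp add: le_imp_inverse_le)
    finally show "w \<in> C k" by (simp add: C_def)
  qed
  moreover have "compact (C n)" for n unfolding C_def by (rule compact)
  ultimately have "\<Inter>(range C) \<noteq> {}" by (intro compact_nest)
  then obtain z where z: "\<And>n. z \<in> C n" by blast
  have "F z \<le> ereal m"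
  proof (rule ereal_le_epsilon2)
    fix e :: real assume "0 < e"
    then obtain n where n: "inverse (real (Suc n)) < e" using reals_Archimedean by blast
    have "F z \<le> ereal (m + inverse (Suc n))" using z[of n] by (simp add: C_def)
    also have "\<dots> \<le> ereal m + ereal e" using n by simp
    finally show "F z \<le> ereal m + ereal e" .
  qed
  show ?thesis
  proof (rule that)
    fix w
    have "ereal m \<le> F w" unfolding m[symmetric] by (rule INF_lower) simp
    with \<open>F z \<le> ereal m\<close> show "F z \<le> F w" by (rule order_trans)
  qed
qed

lemma proximal_objective_coercive:
  fixes \<phi> :: "'a::real_inner \<Rightarrow> ereal"
  assumes minorant: "\<And>w. ereal (inner w b - r) \<le> \<phi> w" and "0 < \<kappa>"
  shows "ereal ((norm (w - c))\<^sup>2 / (4 * \<kappa>) - \<kappa> * (norm b)\<^sup>2 - norm b * norm c - r)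
           \<le> \<phi> w + ereal ((norm (w - c))\<^sup>2 / (2 * \<kappa>))"
proof -
  define s where "s = norm (w - c)"
  have "- (s * norm b) \<le> inner (w - c) b" "- (norm c * norm b) \<le> inner c b"
    unfolding s_def using Cauchy_Schwarz_ineq2 by (metis abs_le_iff minus_le_iff)+
  moreover have "inner w b = inner (w - c) b + inner c b" by (simp add: inner_diff_left)
  moreover have "0 \<le> (s - 2 * \<kappa> * norm b)\<^sup>2 / (4 * \<kappa>)" using \<open>0 < \<kappa>\<close> by simp
  moreover have "(s - 2 * \<kappa> * norm b)\<^sup>2 / (4 * \<kappa>)
      = s\<^sup>2 / (2 * \<kappa>) - s\<^sup>2 / (4 * \<kappa>) - s * norm b + \<kappa> * (norm b)\<^sup>2"
    using \<open>0 < \<kappa>\<close> by (simp add: field_simps power2_eq_square)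
  ultimately have "ereal (s\<^sup>2 / (4 * \<kappa>) - \<kappa> * (norm b)\<^sup>2 - norm b * norm c - r)
      \<le> ereal (inner w b - r) + ereal (s\<^sup>2 / (2 * \<kappa>))"
    by (simp add: mult.commute)
  also have "\<dots> \<le> \<phi> w + ereal (s\<^sup>2 / (2 * \<kappa>))"
    using minorant by (rule add_right_mono)
  finally show ?thesis unfolding s_def .
qed

lemma prox_objective_compact_sublevels:
  fixes \<phi> :: "'a::euclidean_space \<Rightarrow> ereal"
  assumes lsc: "lsc_fun \<phi>" and minorant: "\<And>w. ereal (inner w b - r) \<le> \<phi> w" and "0 < \<kappa>"
  shows "compact {w. \<phi> w + ereal ((norm (w - c))\<^sup>2 / (2 * \<kappa>)) \<le> ereal t}"
    (is "compact ?C")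
  unfolding compact_eq_bounded_closed
proof
  define M where "M = - \<kappa> * (norm b)\<^sup>2 - norm b * norm c - r"
  have "?C \<subseteq> cball c (sqrt (4 * \<kappa> * (t - M)))"
  proof
    fix w assume "w \<in> ?C"
    have "ereal ((norm (w - c))\<^sup>2 / (4 * \<kappa>) + M)
        \<le> \<phi> w + ereal ((norm (w - c))\<^sup>2 / (2 * \<kappa>))"
      using proximal_objective_coercive[OF minorant \<open>0 < \<kappa>\<close>, of w c]
      by (simp add: M_def algebra_simps)
    also have "\<dots> \<le> ereal t" using \<open>w \<in> ?C\<close> by simp
    finally have "ereal ((norm (w - c))\<^sup>2 / (4 * \<kappa>) + M) \<le> ereal t" .
    then have "(norm (w - c))\<^sup>2 / (4 * \<kappa>) \<le> t - M" by simp
    then have "(norm (w - c))\<^sup>2 \<le> 4 * \<kappa> * (t - M)"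
      using \<open>0 < \<kappa>\<close> by (simp add: pos_divide_le_eq mult.commute)
    then have "norm (w - c) \<le> sqrt (4 * \<kappa> * (t - M))" by (rule real_le_rsqrt)
    then show "w \<in> cball c (sqrt (4 * \<kappa> * (t - M)))" by (simp add: dist_norm norm_minus_commute)
  qed
  then show "bounded ?C" by (rule bounded_subset[OF bounded_cball])
  show "closed ?C"
    using \<open>0 < \<kappa>\<close> by (intro closed_sublevel_add_continuous lsc continuous_intros) auto
qed

lemma prox_minimizes:
  fixes \<phi> :: "'a::euclidean_space \<Rightarrow> ereal"
  assumes lsc: "lsc_fun \<phi>" and minorant: "\<And>w. ereal (inner w b - r) \<le> \<phi> w"
    and "\<phi> w0 < \<infinity>" and "0 < \<kappa>"
  shows "\<phi> (prox \<phi> \<kappa> c) + ereal ((norm (prox \<phi> \<kappa> c - c))\<^sup>2 / (2 * \<kappa>))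
           \<le> \<phi> w + ereal ((norm (w - c))\<^sup>2 / (2 * \<kappa>))"
proof -
  define F where "F w = \<phi> w + ereal ((norm (w - c))\<^sup>2 / (2 * \<kappa>))" for w
  define M where "M = - \<kappa> * (norm b)\<^sup>2 - norm b * norm c - r"
  have "compact {w. F w \<le> ereal t}" for t
    unfolding F_def by (rule prox_objective_compact_sublevels[OF lsc minorant \<open>0 < \<kappa>\<close>])
  moreover have "ereal M \<le> F w" for w
  proof -
    have "ereal M \<le> ereal ((norm (w - c))\<^sup>2 / (4 * \<kappa>) + M)" using \<open>0 < \<kappa>\<close> by simp
    also have "\<dots> \<le> F w"
      using proximal_objective_coercive[OF minorant \<open>0 < \<kappa>\<close>, of w c]
      by (simp add: F_def M_def algebra_simps)
    finally show ?thesis .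
  qed
  moreover have "F w0 < \<infinity>" using \<open>\<phi> w0 < \<infinity>\<close> by (simp add: F_def)
  ultimately obtain z where "\<And>w. F z \<le> F w" by (rule ereal_attains_min_compact_sublevels) blast
  then have "\<forall>w. F z \<le> F w" by blast
  then have "\<forall>w. F (prox \<phi> \<kappa> c) \<le> F w" unfolding prox_def F_def by (rule someI)
  then show ?thesis by (simp add: F_def)
qed

lemma norm_add_power2: "(norm (a + b))\<^sup>2 = (norm a)\<^sup>2 + 2 * inner a b + (norm (b :: 'a::real_inner))\<^sup>2"
  using dot_norm[of a b] by simp

lemma le_of_le_add_small_multiples:
  fixes a b c :: real
  assumes "\<And>t. 0 < t \<Longrightarrow> t \<le> 1 \<Longrightarrow> a \<le> b + t * c" and "0 \<le> c"
  shows "a \<le> b"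
proof (rule field_le_epsilon)
  fix e :: real assume "0 < e"
  define t where "t = min 1 (e / (c + 1))"
  have t: "0 < t" "t \<le> 1" using \<open>0 < e\<close> \<open>0 \<le> c\<close> by (auto simp: t_def)
  have "t * c \<le> e / (c + 1) * c" using \<open>0 \<le> c\<close> by (intro mult_right_mono) (auto simp: t_def)
  also have "\<dots> \<le> e" using \<open>0 < e\<close> \<open>0 \<le> c\<close> by (simp add: field_simps)
  finally show "a \<le> b + e" using assms(1)[OF t] by simp
qed

lemma prox_variational_inequality:
  fixes \<phi> :: "'a::real_inner \<Rightarrow> ereal"
  assumes convex: "convex_fun \<phi>" and "0 < \<kappa>"
    and min: "\<And>v. \<phi> z + ereal ((norm (z - c))\<^sup>2 / (2 * \<kappa>)) \<le> \<phi> v + ereal ((norm (v - c))\<^sup>2 / (2 * \<kappa>))"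
    and z: "\<phi> z = ereal Gz" and w: "\<phi> w = ereal Gw"
  shows "Gz \<le> Gw + inner (z - c) (w - z) / \<kappa>"
proof (rule le_of_le_add_small_multiples)
  show "0 \<le> (norm (w - z))\<^sup>2 / (2 * \<kappa>)" using \<open>0 < \<kappa>\<close> by simp
  fix t :: real assume t: "0 < t" "t \<le> 1"
  define v where "v = (1 - t) *\<^sub>R z + t *\<^sub>R w"
  have vc: "v - c = (z - c) + t *\<^sub>R (w - z)" by (simp add: v_def algebra_simps)
  have nv: "(norm (v - c))\<^sup>2 = (norm (z - c))\<^sup>2 + 2 * t * inner (z - c) (w - z) + t\<^sup>2 * (norm (w - z))\<^sup>2"
    unfolding vc norm_add_power2 by (simp add: power_mult_distrib)
  have "\<phi> z + ereal ((norm (z - c))\<^sup>2 / (2 * \<kappa>)) \<le> \<phi> v + ereal ((norm (v - c))\<^sup>2 / (2 * \<kappa>))"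
    by (rule min)
  also have "\<dots> \<le> ereal ((1 - t) * Gz + t * Gw) + ereal ((norm (v - c))\<^sup>2 / (2 * \<kappa>))"
    unfolding v_def using z w t by (intro add_right_mono convex_funD[OF convex]) auto
  finally have "Gz + (norm (z - c))\<^sup>2 / (2 * \<kappa>) \<le> (1 - t) * Gz + t * Gw + (norm (v - c))\<^sup>2 / (2 * \<kappa>)"
    using z by simp
  moreover have "(norm (v - c))\<^sup>2 / (2 * \<kappa>) = (norm (z - c))\<^sup>2 / (2 * \<kappa>)
      + t * (inner (z - c) (w - z) / \<kappa> + t * ((norm (w - z))\<^sup>2 / (2 * \<kappa>)))"
    using \<open>0 < \<kappa>\<close> unfolding nv by (simp add: field_simps power2_eq_square)
  ultimately have "t * Gz \<le> t * (Gw + inner (z - c) (w - z) / \<kappa> + t * ((norm (w - z))\<^sup>2 / (2 * \<kappa>)))"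
    by (simp add: algebra_simps)
  then show "Gz \<le> Gw + inner (z - c) (w - z) / \<kappa> + t * ((norm (w - z))\<^sup>2 / (2 * \<kappa>))"
    using t by simp
qed

lemma prox_three_point:
  fixes \<phi> :: "'a::real_inner \<Rightarrow> ereal"
  assumes "convex_fun \<phi>" and "0 < \<kappa>"
    and "\<And>v. \<phi> z + ereal ((norm (z - c))\<^sup>2 / (2 * \<kappa>)) \<le> \<phi> v + ereal ((norm (v - c))\<^sup>2 / (2 * \<kappa>))"
    and "\<phi> z = ereal Gz" and "\<phi> w = ereal Gw"
  shows "Gz + (norm (z - c))\<^sup>2 / (2 * \<kappa>) + (norm (w - z))\<^sup>2 / (2 * \<kappa>) \<le> Gw + (norm (w - c))\<^sup>2 / (2 * \<kappa>)"
proof -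
  have "w - c = (z - c) + (w - z)" by simp
  then have "(norm (w - c))\<^sup>2 = (norm (z - c))\<^sup>2 + 2 * inner (z - c) (w - z) + (norm (w - z))\<^sup>2"
    by (metis norm_add_power2)
  then have "(norm (w - c))\<^sup>2 / (2 * \<kappa>)
      = (norm (z - c))\<^sup>2 / (2 * \<kappa>) + inner (z - c) (w - z) / \<kappa> + (norm (w - z))\<^sup>2 / (2 * \<kappa>)"
    by (simp add: add_divide_distrib)
  then show ?thesis using prox_variational_inequality[OF assms] by linarith
qed

lemma prox_finite:
  fixes \<phi> :: "'a::euclidean_space \<Rightarrow> ereal"
  assumes "lsc_fun \<phi>" and minorant: "\<And>w. ereal (inner w b - r) \<le> \<phi> w"
    and "\<phi> w0 < \<infinity>" and "0 < \<kappa>"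
  obtains G where "\<phi> (prox \<phi> \<kappa> c) = ereal G"
proof -
  have "\<phi> (prox \<phi> \<kappa> c) + ereal ((norm (prox \<phi> \<kappa> c - c))\<^sup>2 / (2 * \<kappa>))
      \<le> \<phi> w0 + ereal ((norm (w0 - c))\<^sup>2 / (2 * \<kappa>))"
    by (rule prox_minimizes[OF assms])
  then have "\<phi> (prox \<phi> \<kappa> c) \<noteq> \<infinity>" using \<open>\<phi> w0 < \<infinity>\<close> by auto
  moreover have "\<phi> (prox \<phi> \<kappa> c) \<noteq> -\<infinity>" using minorant[of "prox \<phi> \<kappa> c"] by auto
  ultimately show ?thesis using that by (cases "\<phi> (prox \<phi> \<kappa> c)") auto
qed

lemma norm_scaled_center_power2:
  fixes w a :: "'a::real_inner"
  assumes "0 < \<gamma>"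
  shows "(norm (w - (1 / \<gamma>) *\<^sub>R a))\<^sup>2 / (2 * (1 / \<gamma>)) = \<gamma> / 2 * (norm w)\<^sup>2 - inner w a + (norm a)\<^sup>2 / (2 * \<gamma>)"
proof -
  have "(norm (w - (1 / \<gamma>) *\<^sub>R a))\<^sup>2 = (norm w)\<^sup>2 - 2 / \<gamma> * inner w a + (norm a)\<^sup>2 / \<gamma>\<^sup>2"
    using norm_add_power2[of w "(- 1 / \<gamma>) *\<^sub>R a"] by (simp add: power_mult_distrib power_divide)
  then show ?thesis using assms by (simp add: field_simps power2_eq_square)
qed

lemma prox_scaled_three_point:
  fixes \<phi> :: "'a::euclidean_space \<Rightarrow> ereal"
  assumes "convex_fun \<phi>" "lsc_fun \<phi>" "\<And>w. ereal (inner w b - r) \<le> \<phi> w" and "0 < \<gamma>"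
    and z: "z = prox \<phi> (1 / \<gamma>) ((1 / \<gamma>) *\<^sub>R a)" and "\<phi> z = ereal Gz" and "\<phi> w = ereal Gw"
  shows "inner w a - \<gamma> / 2 * (norm w)\<^sup>2 - Gw + \<gamma> / 2 * (norm (w - z))\<^sup>2
           \<le> inner z a - \<gamma> / 2 * (norm z)\<^sup>2 - Gz"
proof -
  have "0 < 1 / \<gamma>" using \<open>0 < \<gamma>\<close> by simp
  have "\<phi> z + ereal ((norm (z - (1 / \<gamma>) *\<^sub>R a))\<^sup>2 / (2 * (1 / \<gamma>)))
      \<le> \<phi> v + ereal ((norm (v - (1 / \<gamma>) *\<^sub>R a))\<^sup>2 / (2 * (1 / \<gamma>)))" for v
  proof -
    have "\<phi> z < \<infinity>" using \<open>\<phi> z = ereal Gz\<close> by simp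
    then show ?thesis unfolding z by (rule prox_minimizes[OF assms(2,3) _ \<open>0 < 1 / \<gamma>\<close>])
  qed
  from prox_three_point[OF assms(1) \<open>0 < 1 / \<gamma>\<close> this assms(6,7)] show ?thesis
    unfolding norm_scaled_center_power2[OF \<open>0 < \<gamma>\<close>] by (simp add: field_simps)
qed

lemma prox_scaled_firmly_nonexpansive:
  fixes \<phi> :: "'a::euclidean_space \<Rightarrow> ereal"
  assumes "convex_fun \<phi>" "lsc_fun \<phi>" "\<And>w. ereal (inner w b - r) \<le> \<phi> w" and "0 < \<gamma>"
    and z1: "z1 = prox \<phi> (1 / \<gamma>) ((1 / \<gamma>) *\<^sub>R a1)" "\<phi> z1 = ereal G1"
    and z2: "z2 = prox \<phi> (1 / \<gamma>) ((1 / \<gamma>) *\<^sub>R a2)" "\<phi> z2 = ereal G2"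
  shows "\<gamma> * (norm (z2 - z1))\<^sup>2 \<le> inner (z2 - z1) (a2 - a1)"
proof -
  have "inner z2 a1 - \<gamma> / 2 * (norm z2)\<^sup>2 - G2 + \<gamma> / 2 * (norm (z2 - z1))\<^sup>2
      \<le> inner z1 a1 - \<gamma> / 2 * (norm z1)\<^sup>2 - G1"
    by (rule prox_scaled_three_point[OF assms(1-4) z1 z2(2)])
  moreover have "inner z1 a2 - \<gamma> / 2 * (norm z1)\<^sup>2 - G1 + \<gamma> / 2 * (norm (z1 - z2))\<^sup>2
      \<le> inner z2 a2 - \<gamma> / 2 * (norm z2)\<^sup>2 - G2"
    by (rule prox_scaled_three_point[OF assms(1-4) z2 z1(2)])
  ultimately show ?thesis
    by (simp add: norm_minus_commute inner_diff_left inner_diff_right)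
qed

lemma closest_point_step_inequality:
  fixes A :: "'n::euclidean_space \<Rightarrow> 's::euclidean_space" and K :: "'n \<Rightarrow> 'p::euclidean_space"
  assumes "convex S" "closed S" "x \<in> S" "linear A" "linear K" "0 < d"
    and x': "x' = closest_point S (u + (\<theta> / d) *\<^sub>R adjoint K y - (1 / d) *\<^sub>R v - (1 / d) *\<^sub>R adjoint A z)"
  shows "d * inner (u - x') (x - x') + \<theta> * inner (K x - K x') y + inner v (x' - x)
           + inner z (A x' - A x) \<le> 0"
proof -
  let ?p = "u + (\<theta> / d) *\<^sub>R adjoint K y - (1 / d) *\<^sub>R v - (1 / d) *\<^sub>R adjoint A z"
  have "inner (?p - x') (x - x') \<le> 0"
    unfolding x' using assms(1-3) by (rule closest_point_dot)
  have adjK: "inner (adjoint K y) (x - x') = inner (K x - K x') y"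
    using adjoint_works[OF \<open>linear K\<close>] by (simp add: inner_commute linear_diff[OF \<open>linear K\<close>])
  have adjA: "inner (adjoint A z) (x - x') = - inner z (A x' - A x)"
    using adjoint_works[OF \<open>linear A\<close>]
    by (simp add: inner_commute linear_diff[OF \<open>linear A\<close>] inner_diff_right)
  have v: "inner v (x - x') = - inner v (x' - x)" by (simp add: inner_diff_right)
  have "d * inner (?p - x') (x - x') = d * (inner (u - x') (x - x') + (\<theta> / d) * inner (adjoint K y) (x - x')
      - (1 / d) * inner v (x - x') - (1 / d) * inner (adjoint A z) (x - x'))"
    by (simp add: inner_diff_left inner_add_left)
  also have "\<dots> = d * inner (u - x') (x - x') + \<theta> * inner (K x - K x') y + inner v (x' - x)
      + inner z (A x' - A x)"
    unfolding adjK adjA v using \<open>0 < d\<close> by (simp add: algebra_simps)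
  finally show ?thesis
    using \<open>inner (?p - x') (x - x') \<le> 0\<close> \<open>0 < d\<close> by (metis mult_le_0_iff less_le_not_le)
qed

lemma relaxation_norm_identity:
  assumes "u' = (1 - \<beta>) *\<^sub>R u + \<beta> *\<^sub>R x'" and "\<beta> \<noteq> 0"
  shows "(norm (x' - u'))\<^sup>2 = (norm (x' - u))\<^sup>2 - (2 - \<beta>) / \<beta> * (norm (u - u'))\<^sup>2"
proof -
  have "x' - u' = (1 - \<beta>) *\<^sub>R (x' - u)" "u - u' = (- \<beta>) *\<^sub>R (x' - u)"
    using assms(1) by (simp_all add: algebra_simps)
  then have n: "(norm (x' - u'))\<^sup>2 = (1 - \<beta>)\<^sup>2 * (norm (x' - u))\<^sup>2"
    "(norm (u - u'))\<^sup>2 = \<beta>\<^sup>2 * (norm (x' - u))\<^sup>2"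
    by (simp_all add: power_mult_distrib)
  show ?thesis unfolding n using assms(2) by (simp add: power2_eq_square field_simps)
qed

lemma descent_lemma:
  fixes h :: "'n::euclidean_space \<Rightarrow> real"
  assumes "convex S" and "S \<subseteq> U"
    and deriv: "\<And>v. v \<in> U \<Longrightarrow> (h has_derivative (\<lambda>w. inner (gradh v) w)) (at v)"
    and lip: "lipschitz_on L U gradh" and "a \<in> S" and "b \<in> S"
  shows "h b \<le> h a + inner (gradh a) (b - a) + L / 2 * (norm (b - a))\<^sup>2"
proof -
  define d where "d = b - a"
  define \<psi> where "\<psi> t = h (a + t *\<^sub>R d) - t * inner (gradh a) d - L / 2 * t\<^sup>2 * (norm d)\<^sup>2" for t
  have "\<psi> 1 \<le> \<psi> 0"
  proof (rule DERIV_nonpos_imp_nonincreasing[of 0 1 \<psi>])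
    fix t :: real assume t: "0 \<le> t" "t \<le> 1"
    let ?v = "a + t *\<^sub>R d"
    have "?v = (1 - t) *\<^sub>R a + t *\<^sub>R b" by (simp add: d_def algebra_simps)
    then have "?v \<in> U"
      using convexD_alt[OF \<open>convex S\<close> \<open>a \<in> S\<close> \<open>b \<in> S\<close>] t \<open>S \<subseteq> U\<close> by auto
    have "((\<lambda>s. a + s *\<^sub>R d) has_derivative (\<lambda>s. s *\<^sub>R d)) (at t)"
      by (auto intro!: derivative_eq_intros)
    from has_derivative_compose[OF this deriv[OF \<open>?v \<in> U\<close>]]
    have "((\<lambda>s. h (a + s *\<^sub>R d)) has_derivative (\<lambda>s. inner (gradh ?v) d * s)) (at t)"
      by (simp add: o_def mult.commute)
    then have h_deriv: "((\<lambda>s. h (a + s *\<^sub>R d)) has_real_derivative inner (gradh ?v) d) (at t)"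
      by (simp add: has_field_derivative_def)
    have \<psi>_deriv: "(\<psi> has_real_derivative
        (inner (gradh ?v) d - inner (gradh a) d - L / 2 * (2 * t) * (norm d)\<^sup>2)) (at t)"
      unfolding \<psi>_def by (rule derivative_eq_intros h_deriv refl | simp)+
    have "norm (gradh ?v - gradh a) \<le> L * norm (?v - a)"
      using lip \<open>?v \<in> U\<close> \<open>a \<in> S\<close> \<open>S \<subseteq> U\<close> unfolding lipschitz_on_def dist_norm by blast
    have "inner (gradh ?v) d - inner (gradh a) d \<le> norm (gradh ?v - gradh a) * norm d"
      using norm_cauchy_schwarz[of "gradh ?v - gradh a" d] by (simp add: inner_diff_left)
    also have "\<dots> \<le> L * norm (?v - a) * norm d"
      using \<open>norm (gradh ?v - gradh a) \<le> L * norm (?v - a)\<close> by (rule mult_right_mono) simp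
    also have "L * norm (?v - a) * norm d = L * t * (norm d)\<^sup>2"
      using t by (simp add: power2_eq_square)
    finally have "inner (gradh ?v) d - inner (gradh a) d - L / 2 * (2 * t) * (norm d)\<^sup>2 \<le> 0"
      by simp
    with \<psi>_deriv show "\<exists>y. (\<psi> has_real_derivative y) (at t) \<and> y \<le> 0" by blast
  qed simp
  then show ?thesis by (simp add: \<psi>_def d_def)
qed

lemma inner_le_of_firmly_nonexpansive:
  fixes p q :: "'a::real_inner"
  assumes "0 < \<gamma>" and firm: "\<gamma> * (norm p)\<^sup>2 \<le> inner p q"
  shows "inner p q \<le> (norm q)\<^sup>2 / \<gamma>"
proof (cases "p = 0")
  case False
  have cs: "inner p q \<le> norm p * norm q" by (rule norm_cauchy_schwarz)
  with firm have "norm p * (\<gamma> * norm p) \<le> norm p * norm q" by (simp add: power2_eq_square mult_ac)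
  then have "norm p \<le> norm q / \<gamma>" using False \<open>0 < \<gamma>\<close> by (simp add: field_simps)
  then have "norm p * norm q \<le> norm q / \<gamma> * norm q" by (rule mult_right_mono) simp
  with cs show ?thesis by (simp add: power2_eq_square)
qed (use \<open>0 < \<gamma>\<close> in simp)

lemma prox_fconj_dual_step:
  fixes A :: "'n::euclidean_space \<Rightarrow> 's::euclidean_space" and g :: "'s \<Rightarrow> ereal"
  assumes "linear A" "proper_fun g" "fconj g w0 < \<infinity>" "0 < \<gamma>"
    and z: "z = prox (fconj g) (1 / \<gamma>) ((1 / \<gamma>) *\<^sub>R A x)"
    and z': "z' = prox (fconj g) (1 / \<gamma>) ((1 / \<gamma>) *\<^sub>R A x')"
  obtains G G' where "fconj g z = ereal G" "fconj g z' = ereal G'"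
    and "inner z' (A x) - \<gamma> / 2 * (norm z')\<^sup>2 - G' + \<gamma> / 2 * (norm (z - z'))\<^sup>2
      \<le> inner z (A x) - \<gamma> / 2 * (norm z)\<^sup>2 - G"
    and "inner z' (A x') - inner z' (A x) - inner z (A x') + inner z (A x)
      \<le> (onorm A)\<^sup>2 / \<gamma> * (norm (x - x'))\<^sup>2"
proof -
  obtain b r where minorant: "\<And>w. ereal (inner w b - r) \<le> fconj g w"
    using fconj_affine_minorant[OF \<open>proper_fun g\<close>] by blast
  note conj = convex_fun_fconj lsc_fun_fconj minorant
  have "0 < 1 / \<gamma>" using \<open>0 < \<gamma>\<close> by simp
  obtain G where G: "fconj g z = ereal G"
    unfolding z using prox_finite[OF lsc_fun_fconj minorant assms(3) \<open>0 < 1 / \<gamma>\<close>] by blast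
  obtain G' where G': "fconj g z' = ereal G'"
    unfolding z' using prox_finite[OF lsc_fun_fconj minorant assms(3) \<open>0 < 1 / \<gamma>\<close>] by blast
  have "inner z' (A x) - \<gamma> / 2 * (norm z')\<^sup>2 - G' + \<gamma> / 2 * (norm (z - z'))\<^sup>2
      \<le> inner z (A x) - \<gamma> / 2 * (norm z)\<^sup>2 - G"
    using prox_scaled_three_point[OF conj \<open>0 < \<gamma>\<close> z G G'] by (simp add: norm_minus_commute)
  moreover have "inner (z' - z) (A x' - A x) \<le> (norm (A x' - A x))\<^sup>2 / \<gamma>"
    using prox_scaled_firmly_nonexpansive[OF conj \<open>0 < \<gamma>\<close> z G z' G']
    by (rule inner_le_of_firmly_nonexpansive[OF \<open>0 < \<gamma>\<close>])
  moreover have "norm (A x' - A x) \<le> onorm A * norm (x - x')"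
    using onorm[of A "x' - x"] \<open>linear A\<close>
    by (simp add: linear_diff linear_conv_bounded_linear norm_minus_commute)
  then have "(norm (A x' - A x))\<^sup>2 / \<gamma> \<le> (onorm A)\<^sup>2 / \<gamma> * (norm (x - x'))\<^sup>2"
    using \<open>0 < \<gamma>\<close> by (simp add: power_mono divide_right_mono flip: power_mult_distrib)
  ultimately show ?thesis
    using G G' by (intro that) (auto simp: inner_diff_left inner_diff_right)
qed

lemma Psi_descent_step:
  fixes S :: "'n::euclidean_space set" and A :: "'n \<Rightarrow> 's::euclidean_space"
    and K :: "'n \<Rightarrow> 'p::euclidean_space" and g :: "'s \<Rightarrow> ereal"
  assumes S: "convex S" "closed S" "S \<subseteq> U"
    and h: "\<And>v. v \<in> U \<Longrightarrow> (h has_derivative (\<lambda>w. inner (gradh v) w)) (at v)"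
      "lipschitz_on L U gradh"
    and lin: "linear A" "linear K" and g: "proper_fun g" "fconj g w0 < \<infinity>"
    and par: "0 < \<beta>" "0 < \<nu>" "0 < \<gamma>" and d: "d = 2 * \<nu> + L + 2 * (onorm A)\<^sup>2 / \<gamma>"
    and x: "x \<in> S"
    and x': "x' = closest_point S
               (u + (\<theta> / d) *\<^sub>R adjoint K y - (1 / d) *\<^sub>R gradh x - (1 / d) *\<^sub>R adjoint A z)"
    and u': "u' = (1 - \<beta>) *\<^sub>R u + \<beta> *\<^sub>R x'"
    and z: "z = prox (fconj g) (1 / \<gamma>) ((1 / \<gamma>) *\<^sub>R A x)"
    and z': "z' = prox (fconj g) (1 / \<gamma>) ((1 / \<gamma>) *\<^sub>R A x')"
  shows "Psi S A g h x' z' u' d \<gamma> + ereal (\<theta> * inner (K x - K x') y)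
           \<le> Psi S A g h x z u d \<gamma> - ereal (\<nu> * (norm (x - x'))\<^sup>2
                + d * (2 - \<beta>) / (2 * \<beta>) * (norm (u - u'))\<^sup>2 + \<gamma> / 2 * (norm (z - z'))\<^sup>2)"
proof -
  have "0 \<le> L" using h(2) by (simp add: lipschitz_on_def)
  then have "0 < d" using par unfolding d by (simp add: add_pos_nonneg)
  have "x' \<in> S" unfolding x' using S(2) x by (auto intro: closest_point_in_set)
  obtain G G' where G: "fconj g z = ereal G" "fconj g z' = ereal G'"
    and z_step: "inner z' (A x) - \<gamma> / 2 * (norm z')\<^sup>2 - G' + \<gamma> / 2 * (norm (z - z'))\<^sup>2
      \<le> inner z (A x) - \<gamma> / 2 * (norm z)\<^sup>2 - G"
    and coupling: "inner z' (A x') - inner z' (A x) - inner z (A x') + inner z (A x)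
      \<le> (onorm A)\<^sup>2 / \<gamma> * (norm (x - x'))\<^sup>2"
    by (rule prox_fconj_dual_step[OF lin(1) g par(3) z z'])
  have h_step: "h x' \<le> h x + inner (gradh x) (x' - x) + L / 2 * (norm (x - x'))\<^sup>2"
    using descent_lemma[OF S(1,3) h x \<open>x' \<in> S\<close>] by (simp add: norm_minus_commute)
  have x_step: "d * inner (u - x') (x - x') + \<theta> * inner (K x - K x') y + inner (gradh x) (x' - x)
      + inner z (A x' - A x) \<le> 0"
    by (rule closest_point_step_inequality[OF S(1,2) x lin \<open>0 < d\<close> x'])
  have u_step: "d / 2 * (norm (x' - u'))\<^sup>2
      = d / 2 * (norm (x' - u))\<^sup>2 - d * (2 - \<beta>) / (2 * \<beta>) * (norm (u - u'))\<^sup>2"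
    using par(1) unfolding relaxation_norm_identity[OF u' less_imp_neq[OF par(1), symmetric]]
    by (simp add: field_simps)
  have "(norm (x' - u))\<^sup>2 = (norm ((x - u) + (x' - x)))\<^sup>2" by (simp add: algebra_simps)
  also have "\<dots> = (norm (x - u))\<^sup>2 + 2 * inner (x - u) (x' - x) + (norm (x - x'))\<^sup>2"
    by (simp only: norm_add_power2 norm_minus_commute)
  finally have x'u: "(norm (x' - u))\<^sup>2
      = (norm (x - u))\<^sup>2 + 2 * inner (x - u) (x' - x) + (norm (x - x'))\<^sup>2" .
  have "d / 2 * (norm (x' - u))\<^sup>2
      = d / 2 * (norm (x - u))\<^sup>2 + d * inner (x - u) (x' - x) + d / 2 * (norm (x - x'))\<^sup>2"
    unfolding x'u by (simp add: distrib_left)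
  moreover have "d * inner (u - x') (x - x') = d * (norm (x - x'))\<^sup>2 + d * inner (x - u) (x' - x)"
    by (simp add: inner_commute power2_norm_eq_inner algebra_simps)
  moreover have "d / 2 * (norm (x - x'))\<^sup>2 - d * (norm (x - x'))\<^sup>2 + L / 2 * (norm (x - x'))\<^sup>2
      + (onorm A)\<^sup>2 / \<gamma> * (norm (x - x'))\<^sup>2 = - (\<nu> * (norm (x - x'))\<^sup>2)"
    unfolding d by (simp add: field_simps)
  moreover have "inner z (A x' - A x) = inner z (A x') - inner z (A x)" by (simp add: inner_diff_right)
  ultimately have "inner z' (A x') + h x' + d / 2 * (norm (x' - u'))\<^sup>2 - \<gamma> / 2 * (norm z')\<^sup>2 - G'
      + \<theta> * inner (K x - K x') y
      \<le> inner z (A x) + h x + d / 2 * (norm (x - u))\<^sup>2 - \<gamma> / 2 * (norm z)\<^sup>2 - G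
        - (\<nu> * (norm (x - x'))\<^sup>2 + d * (2 - \<beta>) / (2 * \<beta>) * (norm (u - u'))\<^sup>2
           + \<gamma> / 2 * (norm (z - z'))\<^sup>2)"
    using h_step x_step z_step coupling u_step by linarith
  then show ?thesis using x \<open>x' \<in> S\<close> by (simp add: Psi_def G)
qed

lemma descent_via_subgradient:
  fixes \<Psi> \<Psi>' :: ereal
  assumes descent: "\<Psi>' + ereal (\<theta> * inner (v - v') y) \<le> \<Psi> - ereal D"
    and \<Psi>: "\<Psi> = ereal (\<theta> * fv)" and "0 < \<theta>"
    and y: "y \<in> subdiff f v" and fv: "f v = ereal fv" and fv': "f v' = ereal fv'"
  shows "\<Psi>' + ereal \<theta> * f v - ereal \<theta> * (ereal (inner v' y) - fconj f y) \<le> \<Psi> - ereal D"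
    and "\<Psi>' - ereal \<theta> * f v' \<le> - ereal D"
proof -
  have "ereal (fv + inner y (v' - v)) \<le> f v'"
    using y fv unfolding subdiff_def by auto
  then have "\<theta> * fv + \<theta> * inner y (v' - v) \<le> \<theta> * fv'"
    using fv' \<open>0 < \<theta>\<close> by (simp flip: distrib_left)
  moreover note fconj_subdiff_eq[OF y fv]
  ultimately show "\<Psi>' + ereal \<theta> * f v - ereal \<theta> * (ereal (inner v' y) - fconj f y) \<le> \<Psi> - ereal D"
    and "\<Psi>' - ereal \<theta> * f v' \<le> - ereal D"
    using descent unfolding \<Psi> fv fv'
    by (cases \<Psi>'; auto simp: inner_commute algebra_simps)+
qed

lemma finite_pos_on_interior_eff_dom:
  assumes "w \<in> interior (eff_dom f)" and "0 < f w"
  obtains r where "f w = ereal r" and "0 < r"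
proof -
  have "f w < \<infinity>" using assms(1) interior_subset unfolding eff_dom_def by blast
  then show ?thesis using assms(2) that by (cases "f w") auto
qed

lemma ereal_eq_divide_pos:
  assumes "ereal t = P / ereal r" and "0 < P / ereal r" and "0 < r"
  shows "P = ereal (t * r)" and "0 < t"
  using assms by (cases P; auto)+

lemma backtracking_stalls:
  fixes \<gamma> q :: real
  assumes "0 < \<gamma>" "0 < q" "q < 1" and "\<gamma> = (if b then \<gamma> * q ^ j * q else \<gamma> * q ^ j)"
  shows "\<gamma> * q ^ j = \<gamma>"
proof (cases b)
  case True
  have "q ^ Suc j < 1" using assms(2,3) by (rule power_Suc_less_one)
  then have "\<gamma> * q ^ Suc j < \<gamma>" using assms(1) by simp
  moreover have "\<gamma> = \<gamma> * q ^ Suc j" using True assms(4) by (simp add: ac_simps)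
  ultimately show ?thesis by linarith
qed (use assms(4) in simp)

theorem theorem5p2:
  fixes S :: "'n::euclidean_space set"
    and A :: "'n \<Rightarrow> 's::euclidean_space" and K :: "'n \<Rightarrow> 'p::euclidean_space"
    and g :: "'s \<Rightarrow> ereal" and f :: "'p \<Rightarrow> ereal"
    and h :: "'n \<Rightarrow> real" and gradh :: "'n \<Rightarrow> 'n" and L :: real and U :: "'n set"
    and ell :: real
    and \<beta> \<nu> q \<epsilon> :: real
    and x u :: "nat \<Rightarrow> 'n" and z :: "nat \<Rightarrow> 's" and y :: "nat \<Rightarrow> 'p"
    and \<theta> \<delta> \<gamma>s :: "nat \<Rightarrow> real" and jj :: "nat \<Rightarrow> nat"
    and \<gamma> :: real and K0 :: nat
  assumes S: "S \<noteq> {}" "convex S" "compact S"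
    and lin: "linear A" "linear K"
    and g: "proper_fun g" "convex_fun g" "lsc_fun g"
    and h: "open U" "S \<subseteq> U" "\<And>v. v \<in> U \<Longrightarrow> (h has_derivative (\<lambda>w. inner (gradh v) w)) (at v)"
           "lipschitz_on L U gradh"
    and f: "proper_fun f" "convex_fun f" "lsc_fun f"
           "K ` S \<subseteq> interior (eff_dom f)" "\<And>v. v \<in> S \<Longrightarrow> f (K v) > 0"
    and dom: "S \<inter> A -` eff_dom g \<noteq> {}"
    and inf_pos: "(INF v\<in>S. g (A v) + ereal (h v)) > 0"
    and subg: "A ` S \<subseteq> subdiff_dom g" "ell > 0" "\<And>v. v \<in> S \<Longrightarrow> infdist 0 (subdiff g (A v)) \<le> ell"
    and par: "0 < \<beta>" "\<beta> < 2" "\<nu> > 0" "0 < q" "q < 1" "\<delta> 0 > 0" "\<theta> 0 > 0" "\<gamma>s 0 = 1" "\<epsilon> > 0"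
    and step_y: "\<And>k. y (Suc k) \<in> subdiff f (K (x k))"
    and step_x: "\<And>k. x (Suc k) = closest_point S
                   (u k + (\<theta> k / \<delta> k) *\<^sub>R adjoint K (y (Suc k)) - (1 / \<delta> k) *\<^sub>R gradh (x k)
                    - (1 / \<delta> k) *\<^sub>R adjoint A (z k))"
    and step_u: "\<And>k. u (Suc k) = (1 - \<beta>) *\<^sub>R u k + \<beta> *\<^sub>R x (Suc k)"
    and step_z: "\<And>k. let gj = (\<lambda>j. \<gamma>s k * q ^ j);
                         zc = (\<lambda>j. prox (fconj g) (1 / gj j) ((1 / gj j) *\<^sub>R A (x (Suc k))));
                         P = (\<lambda>j. Psi S A g h (x (Suc k)) (zc j) (u (Suc k)) (\<delta> k) (gj j)
                                    / f (K (x (Suc k))))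
                     in P (jj k) > 0 \<and> (\<forall>j < jj k. \<not> P j > 0)
                        \<and> ereal (\<theta> (Suc k)) = P (jj k)
                        \<and> z (Suc k) = zc (jj k)
                        \<and> \<gamma>s (Suc k) = (if norm (z (Suc k)) > min (\<epsilon> / gj (jj k)) (sqrt (2 * \<epsilon> / gj (jj k)))
                                         then gj (jj k) * q else gj (jj k))
                        \<and> \<delta> (Suc k) = 2 * \<nu> + L + 2 * (onorm A)\<^sup>2 / \<gamma>s (Suc k)"
    and gam: "\<gamma> > 0"
    and tail: "\<And>k. k \<ge> K0 \<Longrightarrow> \<gamma>s k = \<gamma> \<and> \<delta> k = 2 * \<nu> + L + 2 * (onorm A)\<^sup>2 / \<gamma>
                  \<and> norm (z (Suc k)) \<le> min (\<epsilon> / \<gamma>) (sqrt (2 * \<epsilon> / \<gamma>))"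
  shows "\<forall>k \<ge> K0 + 1.
    (let d = 2 * \<nu> + L + 2 * (onorm A)\<^sup>2 / \<gamma>;
         c1 = \<nu>; c2 = d * (2 - \<beta>) / (2 * \<beta>); c3 = \<gamma> / 2;
         D = c1 * (norm (x k - x (Suc k)))\<^sup>2 + c2 * (norm (u k - u (Suc k)))\<^sup>2
             + c3 * (norm (z k - z (Suc k)))\<^sup>2
     in Psi S A g h (x (Suc k)) (z (Suc k)) (u (Suc k)) d \<gamma>
          + ereal (\<theta> k) * f (K (x k))
          - ereal (\<theta> k) * (ereal (inner (K (x (Suc k))) (y (Suc k))) - fconj f (y (Suc k)))
        \<le> Psi S A g h (x k) (z k) (u k) d \<gamma> - ereal D
      \<and> Psi S A g h (x (Suc k)) (z (Suc k)) (u (Suc k)) d \<gamma> - ereal (\<theta> k) * f (K (x (Suc k)))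
        \<le> - ereal D)"
  apply (intro allI impI)
  subgoal premises k_ge for k
  proof -
    obtain m where k: "k = Suc m" "K0 \<le> m" using k_ge by (cases k) auto
    define d where "d = 2 * \<nu> + L + 2 * (onorm A)\<^sup>2 / \<gamma>"
    have stalled: "\<delta> n = d \<and> z (Suc n) = prox (fconj g) (1 / \<gamma>) ((1 / \<gamma>) *\<^sub>R A (x (Suc n)))
        \<and> ereal (\<theta> (Suc n)) = Psi S A g h (x (Suc n)) (z (Suc n)) (u (Suc n)) d \<gamma> / f (K (x (Suc n)))
        \<and> 0 < Psi S A g h (x (Suc n)) (z (Suc n)) (u (Suc n)) d \<gamma> / f (K (x (Suc n)))"
      if "K0 \<le> n" for n
    proof -
      have \<gamma>s: "\<gamma>s n = \<gamma>" "\<gamma>s (Suc n) = \<gamma>" "\<delta> n = d"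
        using tail[of n] tail[of "Suc n"] that by (auto simp: d_def)
      obtain b where "\<gamma>s (Suc n) = (if b then \<gamma>s n * q ^ jj n * q else \<gamma>s n * q ^ jj n)"
        using step_z[of n] unfolding Let_def by blast
      then have stall: "\<gamma> * q ^ jj n = \<gamma>"
        unfolding \<gamma>s(1,2) by (rule backtracking_stalls[OF gam par(4,5)])
      show ?thesis using step_z[of n] \<gamma>s(3) unfolding Let_def \<gamma>s(1) stall by simp
    qed
    have xS: "x (Suc n) \<in> S" for n
      unfolding step_x[of n] using compact_imp_closed[OF S(3)] S(1) by (rule closest_point_in_set)
    have "K (x (Suc n)) \<in> interior (eff_dom f)" "0 < f (K (x (Suc n)))" for n
      using f(4,5) xS by auto
    then obtain fk fk' where fk: "f (K (x k)) = ereal fk" "0 < fk" and fk': "f (K (x (Suc k))) = ereal fk'"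
      unfolding k(1) by (metis finite_pos_on_interior_eff_dom)
    have "ereal (\<theta> k) = Psi S A g h (x k) (z k) (u k) d \<gamma> / ereal fk"
      "0 < Psi S A g h (x k) (z k) (u k) d \<gamma> / ereal fk"
      using stalled[OF k(2)] fk(1) k(1) by auto
    note Psi_k = ereal_eq_divide_pos[OF this fk(2)]
    then have "fconj g (z k) < \<infinity>"
      using xS k(1) by (cases "fconj g (z k)") (auto simp: Psi_def)
    then have "Psi S A g h (x (Suc k)) (z (Suc k)) (u (Suc k)) d \<gamma>
          + ereal (\<theta> k * inner (K (x k) - K (x (Suc k))) (y (Suc k)))
        \<le> Psi S A g h (x k) (z k) (u k) d \<gamma> - ereal (\<nu> * (norm (x k - x (Suc k)))\<^sup>2
           + d * (2 - \<beta>) / (2 * \<beta>) * (norm (u k - u (Suc k)))\<^sup>2 + \<gamma> / 2 * (norm (z k - z (Suc k)))\<^sup>2)"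
      using stalled[OF k(2)] stalled[of k] k xS step_x[of k] step_u[of k]
      by (intro Psi_descent_step[OF S(2) compact_imp_closed[OF S(3)] h(2-4) lin g(1)])
        (auto simp: d_def par gam)
    from descent_via_subgradient[OF this Psi_k step_y fk(1) fk'] show ?thesis
      unfolding Let_def d_def[symmetric] by blast
  qed
  done

end
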